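(* Let $R$ be a commutative ring with identity, $I$ a proper ideal of $R$, and $T=R\propto R/I$. The following are equivalent: (1) $T$ is semi-complemented; (2) $T$ is semi-complemented and $I\subseteq\mathfrak{N}(R)$; (3) $T$ satisfies Property $D$; (4) $R$ satisfies Property $D$ and $R/I$ is a torsion-free $R$-module.
   Context: For an $R$-module $M$, the trivial extension $R\propto M$ is $R\times M$ with coordinatewise addition and multiplication $(r,m)(s,n)=(rs,rn+sm)$. $\mathfrak{N}(A)$ is the nilradical and $\mathrm{reg}(A)$ the set of regular elements. An element $a$ is complemented if there is $b$ with $ab=0$ and $a+b\in\mathrm{reg}(A)$; $A$ is semi-complemented if every element of $A\setminus\mathfrak{N}(A)$ is complemented; $A$ satisfies Property $D$ if $A\setminus\mathfrak{N}(A)=\mathrm{reg}(A)$. An $R$-module $M$ is torsion-free if $rm=0$ with $r\in\mathrm{reg}(R)$ implies $m=0$. *)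

theory Defs
  imports "HOL-Algebra.QuotRing" "HOL-Algebra.Module"
begin

definition reg_elems :: "('a, 'c) ring_scheme \<Rightarrow> 'a set" where
  "reg_elems A = {a \<in> carrier A. \<forall>b \<in> carrier A. a \<otimes>\<^bsub>A\<^esub> b = \<zero>\<^bsub>A\<^esub> \<longrightarrow> b = \<zero>\<^bsub>A\<^esub>}"

definition nilrad :: "('a, 'c) ring_scheme \<Rightarrow> 'a set" where
  "nilrad A = {a \<in> carrier A. \<exists>n::nat. a [^]\<^bsub>A\<^esub> n = \<zero>\<^bsub>A\<^esub>}"

definition complemented :: "('a, 'c) ring_scheme \<Rightarrow> 'a \<Rightarrow> bool" where
  "complemented A a \<longleftrightarrow> (\<exists>b \<in> carrier A. a \<otimes>\<^bsub>A\<^esub> b = \<zero>\<^bsub>A\<^esub> \<and> a \<oplus>\<^bsub>A\<^esub> b \<in> reg_elems A)"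

definition semi_complemented :: "('a, 'c) ring_scheme \<Rightarrow> bool" where
  "semi_complemented A \<longleftrightarrow> (\<forall>a \<in> carrier A - nilrad A. complemented A a)"

definition property_D :: "('a, 'c) ring_scheme \<Rightarrow> bool" where
  "property_D A \<longleftrightarrow> carrier A - nilrad A = reg_elems A"

definition torsion_free :: "('a, 'c) ring_scheme \<Rightarrow> ('a, 'b, 'd) module_scheme \<Rightarrow> bool" where
  "torsion_free R M \<longleftrightarrow>
     (\<forall>r \<in> reg_elems R. \<forall>m \<in> carrier M. r \<odot>\<^bsub>M\<^esub> m = \<zero>\<^bsub>M\<^esub> \<longrightarrow> m = \<zero>\<^bsub>M\<^esub>)"

definition triv_ext :: "('a, 'c) ring_scheme \<Rightarrow> ('a, 'b, 'd) module_scheme \<Rightarrow> ('a \<times> 'b) ring" where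
  "triv_ext R M =
     \<lparr>carrier = carrier R \<times> carrier M,
      mult = (\<lambda>x y. (fst x \<otimes>\<^bsub>R\<^esub> fst y, (fst x \<odot>\<^bsub>M\<^esub> snd y) \<oplus>\<^bsub>M\<^esub> (fst y \<odot>\<^bsub>M\<^esub> snd x))),
      one = (\<one>\<^bsub>R\<^esub>, \<zero>\<^bsub>M\<^esub>),
      zero = (\<zero>\<^bsub>R\<^esub>, \<zero>\<^bsub>M\<^esub>),
      add = (\<lambda>x y. (fst x \<oplus>\<^bsub>R\<^esub> fst y, snd x \<oplus>\<^bsub>M\<^esub> snd y))\<rparr>"

definition quot_module :: "('a, 'c) ring_scheme \<Rightarrow> 'a set \<Rightarrow> ('a, 'a set) module" where
  "quot_module R I =
     \<lparr>carrier = carrier (R Quot I),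
      mult = mult (R Quot I),
      one = one (R Quot I),
      zero = zero (R Quot I),
      add = add (R Quot I),
      smult = (\<lambda>r X. (I +>\<^bsub>R\<^esub> r) \<otimes>\<^bsub>R Quot I\<^esub> X)\<rparr>"

end

theory Submission
  imports Defs
begin

text \<open>
  In \<open>R \<propto> M\<close> nilpotency and regularity are decided by the first coordinate: \<open>(r, m)\<close>
  is nilpotent iff \<open>r\<close> is, and regular iff \<open>r\<close> is regular in \<open>R\<close> and acts injectively
  on \<open>M\<close>. Hence Property D for \<open>R \<propto> M\<close> is Property D for \<open>R\<close> plus torsion-freeness
  of \<open>M\<close>, and Property D gives semi-complementedness with complement \<open>0\<close>.

  Conversely, let \<open>R \<propto> R/I\<close> be semi-complemented and \<open>r\<close> not nilpotent. A complement
  \<open>(s, y)\<close> of \<open>(r, 1)\<close> gives \<open>rs = 0\<close> and \<open>ry + s = 0\<close> in \<open>R/I\<close>, with \<open>r + s\<close>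
  regular in \<open>R\<close> and on \<open>R/I\<close>. Multiplying the second equation by \<open>s\<close> gives
  \<open>s\<^sup>2 = 0\<close> in \<open>R/I\<close>, so \<open>(r + s) s = 0\<close> there and \<open>s \<in> I\<close>. For \<open>r \<in> I\<close> this
  contradicts \<open>1 \<noteq> 0\<close> in \<open>R/I\<close>, so \<open>I \<subseteq> nilrad R\<close>; in general \<open>s\<close> is then
  nilpotent, so \<open>r\<close> is regular, and \<open>r\<close> acts on \<open>R/I\<close> as \<open>r + s\<close> does.
\<close>

definition regular_on :: "('a, 'b, 'd) module_scheme \<Rightarrow> 'a \<Rightarrow> bool" where
  "regular_on M r \<longleftrightarrow> (\<forall>m \<in> carrier M. r \<odot>\<^bsub>M\<^esub> m = \<zero>\<^bsub>M\<^esub> \<longrightarrow> m = \<zero>\<^bsub>M\<^esub>)"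

lemma torsion_free_iff_regular_on: "torsion_free R M \<longleftrightarrow> (\<forall>r \<in> reg_elems R. regular_on M r)"
  by (simp add: torsion_free_def regular_on_def)

lemma nilradI: "a \<in> carrier A \<Longrightarrow> a [^]\<^bsub>A\<^esub> (n::nat) = \<zero>\<^bsub>A\<^esub> \<Longrightarrow> a \<in> nilrad A"
  unfolding nilrad_def by blast

lemma reg_elemsD:
  "u \<in> reg_elems A \<Longrightarrow> t \<in> carrier A \<Longrightarrow> u \<otimes>\<^bsub>A\<^esub> t = \<zero>\<^bsub>A\<^esub> \<Longrightarrow> t = \<zero>\<^bsub>A\<^esub>"
  by (simp add: reg_elems_def)

lemma reg_elems_subset: "reg_elems A \<subseteq> carrier A"
  unfolding reg_elems_def by blast

lemma property_D_iff:
  "property_D A \<longleftrightarrow> (\<forall>a \<in> carrier A. a \<notin> nilrad A \<longleftrightarrow> a \<in> reg_elems A)"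
  using reg_elems_subset[of A] unfolding property_D_def by blast

context cring
begin

lemma reg_elems_pow_closed:
  assumes "u \<in> reg_elems R" shows "u [^] (n::nat) \<in> reg_elems R"
proof (induction n)
  case 0
  then show ?case by (simp add: reg_elems_def)
next
  case (Suc n)
  have u: "u \<in> carrier R" using assms by (simp add: reg_elems_def)
  show ?case unfolding reg_elems_def
  proof (intro CollectI conjI ballI impI)
    fix t assume t: "t \<in> carrier R" and "u [^] Suc n \<otimes> t = \<zero>"
    then have "u [^] n \<otimes> (u \<otimes> t) = \<zero>" using u by (simp add: m_assoc)
    then have "u \<otimes> t = \<zero>" using reg_elemsD[OF Suc.IH, of "u \<otimes> t"] u t by simp
    then show "t = \<zero>" by (rule reg_elemsD[OF assms t])
  qed (use u in simp)
qed

lemma reg_elems_disjoint_nilrad: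
  assumes "\<one> \<noteq> \<zero>" shows "reg_elems R \<inter> nilrad R = {}"
proof (rule ccontr)
  assume "reg_elems R \<inter> nilrad R \<noteq> {}"
  then obtain u n where "u \<in> reg_elems R" and "u [^] (n::nat) = \<zero>"
    by (auto simp: nilrad_def)
  then have "\<zero> \<in> reg_elems R" using reg_elems_pow_closed by metis
  then have "\<one> = \<zero>" using reg_elemsD[of \<zero> R \<one>] by simp
  with assms show False ..
qed

text \<open>If \<open>r t = 0\<close> then \<open>(r + s)\<^sup>k t = s\<^sup>k t\<close>, which vanishes for large \<open>k\<close>.\<close>
lemma reg_elems_of_add_nilrad:
  assumes r: "r \<in> carrier R" and s: "s \<in> nilrad R" and reg: "r \<oplus> s \<in> reg_elems R"
  shows "r \<in> reg_elems R"
  unfolding reg_elems_def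
proof (intro CollectI conjI ballI impI r)
  fix t assume t: "t \<in> carrier R" and rt: "r \<otimes> t = \<zero>"
  have sR: "s \<in> carrier R" using s by (simp add: nilrad_def)
  have pow: "(r \<oplus> s) [^] k \<otimes> t = s [^] k \<otimes> t" for k :: nat
  proof (induction k)
    case (Suc k)
    have "(r \<oplus> s) [^] Suc k \<otimes> t = (r \<oplus> s) [^] k \<otimes> ((r \<oplus> s) \<otimes> t)"
      using r sR t by (simp add: m_assoc nat_pow_Suc2)
    also have "(r \<oplus> s) \<otimes> t = s \<otimes> t" using r sR t rt by (simp add: l_distr)
    also have "(r \<oplus> s) [^] k \<otimes> (s \<otimes> t) = s \<otimes> ((r \<oplus> s) [^] k \<otimes> t)"
      using r sR t by (simp add: m_lcomm)
    also have "\<dots> = s \<otimes> (s [^] k \<otimes> t)" by (simp only: Suc)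
    also have "\<dots> = s [^] Suc k \<otimes> t" using sR t by (metis m_assoc nat_pow_Suc2 nat_pow_closed)
    finally show ?case .
  qed simp
  obtain n where "s [^] (n::nat) = \<zero>" using s by (auto simp: nilrad_def)
  then have "(r \<oplus> s) [^] n \<otimes> t = \<zero>" using pow t by simp
  then show "t = \<zero>" by (rule reg_elemsD[OF reg_elems_pow_closed[OF reg] t])
qed

end

lemma triv_ext_carrier [simp]: "carrier (triv_ext R M) = carrier R \<times> carrier M"
  and triv_ext_mult [simp]:
    "(r, m) \<otimes>\<^bsub>triv_ext R M\<^esub> (s, n) = (r \<otimes>\<^bsub>R\<^esub> s, r \<odot>\<^bsub>M\<^esub> n \<oplus>\<^bsub>M\<^esub> s \<odot>\<^bsub>M\<^esub> m)"
  and triv_ext_add [simp]: "(r, m) \<oplus>\<^bsub>triv_ext R M\<^esub> (s, n) = (r \<oplus>\<^bsub>R\<^esub> s, m \<oplus>\<^bsub>M\<^esub> n)"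
  and triv_ext_zero [simp]: "\<zero>\<^bsub>triv_ext R M\<^esub> = (\<zero>\<^bsub>R\<^esub>, \<zero>\<^bsub>M\<^esub>)"
  and triv_ext_one [simp]: "\<one>\<^bsub>triv_ext R M\<^esub> = (\<one>\<^bsub>R\<^esub>, \<zero>\<^bsub>M\<^esub>)"
  by (simp_all add: triv_ext_def)

context module
begin

lemma triv_ext_nat_pow_Suc:
  assumes r: "r \<in> carrier R" and m: "m \<in> carrier M"
  shows "\<exists>m' \<in> carrier M. (r, m) [^]\<^bsub>triv_ext R M\<^esub> Suc n = (r [^] Suc n, r [^] n \<odot>\<^bsub>M\<^esub> m')"
proof (induction n)
  case 0
  show ?case using r m by (intro bexI[of _ m]) simp_all
next
  case (Suc n)
  then obtain m' where m': "m' \<in> carrier M"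
    and pow: "(r, m) [^]\<^bsub>triv_ext R M\<^esub> Suc n = (r [^] Suc n, r [^] n \<odot>\<^bsub>M\<^esub> m')" by blast
  have "r \<odot>\<^bsub>M\<^esub> (r [^] n \<odot>\<^bsub>M\<^esub> m') = r [^] Suc n \<odot>\<^bsub>M\<^esub> m'"
    using r m' by (simp add: smult_assoc1[symmetric] m_comm)
  then have "(r, m) [^]\<^bsub>triv_ext R M\<^esub> Suc (Suc n)
      = (r [^] Suc (Suc n), r [^] Suc n \<odot>\<^bsub>M\<^esub> (m \<oplus>\<^bsub>M\<^esub> m'))"
    using r m m' pow by (simp add: smult_r_distr)
  then show ?case using m m' by blast
qed

lemma nilrad_triv_ext:
  assumes r: "r \<in> carrier R" and m: "m \<in> carrier M"
  shows "(r, m) \<in> nilrad (triv_ext R M) \<longleftrightarrow> r \<in> nilrad R"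
proof
  assume "(r, m) \<in> nilrad (triv_ext R M)"
  then obtain n :: nat where "(r, m) [^]\<^bsub>triv_ext R M\<^esub> n = \<zero>\<^bsub>triv_ext R M\<^esub>"
    unfolding nilrad_def by blast
  then have "(r, m) [^]\<^bsub>triv_ext R M\<^esub> Suc n = \<zero>\<^bsub>triv_ext R M\<^esub>"
    using r m by simp
  then have "r [^] Suc n = \<zero>" using triv_ext_nat_pow_Suc[OF r m, of n] by auto
  then show "r \<in> nilrad R" using r by (rule nilradI[rotated])
next
  assume "r \<in> nilrad R"
  then obtain n where "r [^] (n::nat) = \<zero>" by (auto simp: nilrad_def)
  then have "(r, m) [^]\<^bsub>triv_ext R M\<^esub> Suc n = \<zero>\<^bsub>triv_ext R M\<^esub>"
    using triv_ext_nat_pow_Suc[OF r m, of n] r by (auto simp: nat_pow_Suc2)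
  then show "(r, m) \<in> nilrad (triv_ext R M)" by (rule nilradI[rotated]) (simp add: r m)
qed

lemma reg_elems_triv_ext:
  assumes r: "r \<in> carrier R" and m: "m \<in> carrier M"
  shows "(r, m) \<in> reg_elems (triv_ext R M) \<longleftrightarrow> r \<in> reg_elems R \<and> regular_on M r"
proof
  assume reg: "(r, m) \<in> reg_elems (triv_ext R M)"
  have annihilator_trivial: "t = \<zero> \<and> n = \<zero>\<^bsub>M\<^esub>"
    if "t \<in> carrier R" "n \<in> carrier M"
      and "(r, m) \<otimes>\<^bsub>triv_ext R M\<^esub> (t, n) = \<zero>\<^bsub>triv_ext R M\<^esub>" for t n
  proof -
    have "(t, n) \<in> carrier (triv_ext R M)" using that by simp
    then have "(t, n) = \<zero>\<^bsub>triv_ext R M\<^esub>" using that(3) by (rule reg_elemsD[OF reg])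
    then show ?thesis by (simp only: triv_ext_zero prod.inject)
  qed
  have M_reg: "regular_on M r" unfolding regular_on_def
  proof (intro ballI impI)
    fix n assume n: "n \<in> carrier M" and "r \<odot>\<^bsub>M\<^esub> n = \<zero>\<^bsub>M\<^esub>"
    then have "(r, m) \<otimes>\<^bsub>triv_ext R M\<^esub> (\<zero>, n) = \<zero>\<^bsub>triv_ext R M\<^esub>" using r m by simp
    then show "n = \<zero>\<^bsub>M\<^esub>" using annihilator_trivial n by blast
  qed
  have "r \<in> reg_elems R" unfolding reg_elems_def
  proof (intro CollectI conjI ballI impI r)
    fix t assume t: "t \<in> carrier R" and rt: "r \<otimes> t = \<zero>"
    then have "r \<odot>\<^bsub>M\<^esub> (t \<odot>\<^bsub>M\<^esub> m) = \<zero>\<^bsub>M\<^esub>" using r m by (simp add: smult_assoc1[symmetric])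
    then have "t \<odot>\<^bsub>M\<^esub> m = \<zero>\<^bsub>M\<^esub>" using M_reg t m by (simp add: regular_on_def)
    then show "t = \<zero>" using annihilator_trivial[of t "\<zero>\<^bsub>M\<^esub>"] r t rt by simp
  qed
  with M_reg show "r \<in> reg_elems R \<and> regular_on M r" by blast
next
  assume "r \<in> reg_elems R \<and> regular_on M r"
  then have r_reg: "r \<in> reg_elems R" and M_reg: "regular_on M r" by simp_all
  show "(r, m) \<in> reg_elems (triv_ext R M)" unfolding reg_elems_def
  proof (intro CollectI conjI ballI impI)
    fix b assume b: "b \<in> carrier (triv_ext R M)"
      and rmb: "(r, m) \<otimes>\<^bsub>triv_ext R M\<^esub> b = \<zero>\<^bsub>triv_ext R M\<^esub>"
    obtain t n where b_eq: "b = (t, n)" by fastforce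
    with b have t: "t \<in> carrier R" and n: "n \<in> carrier M" by simp_all
    have "r \<otimes> t = \<zero>" using rmb b_eq by simp
    then have t0: "t = \<zero>" by (rule reg_elemsD[OF r_reg t])
    then have "r \<odot>\<^bsub>M\<^esub> n = \<zero>\<^bsub>M\<^esub>" using rmb b_eq r m n by simp
    then have "n = \<zero>\<^bsub>M\<^esub>" using M_reg n by (simp add: regular_on_def)
    with t0 b_eq show "b = \<zero>\<^bsub>triv_ext R M\<^esub>" by simp
  qed (simp add: r m)
qed

lemma property_D_triv_ext_iff_regular:
  assumes "\<one> \<noteq> \<zero>"
  shows "property_D (triv_ext R M)
    \<longleftrightarrow> (\<forall>r \<in> carrier R - nilrad R. r \<in> reg_elems R \<and> regular_on M r)"
proof -
  have "property_D (triv_ext R M)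
      \<longleftrightarrow> (\<forall>r \<in> carrier R. \<forall>m \<in> carrier M.
            r \<notin> nilrad R \<longleftrightarrow> r \<in> reg_elems R \<and> regular_on M r)"
    by (simp add: property_D_iff nilrad_triv_ext reg_elems_triv_ext)
  also have "\<dots> \<longleftrightarrow> (\<forall>r \<in> carrier R. r \<notin> nilrad R \<longleftrightarrow> r \<in> reg_elems R \<and> regular_on M r)"
    using M.zero_closed by blast
  also have "\<dots> \<longleftrightarrow> (\<forall>r \<in> carrier R - nilrad R. r \<in> reg_elems R \<and> regular_on M r)"
    using reg_elems_disjoint_nilrad[OF assms] by auto
  finally show ?thesis .
qed

lemma property_D_triv_ext_iff:
  assumes "\<one> \<noteq> \<zero>"
  shows "property_D (triv_ext R M) \<longleftrightarrow> property_D R \<and> torsion_free R M"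
proof -
  have "property_D R \<and> torsion_free R M
      \<longleftrightarrow> (\<forall>r \<in> carrier R - nilrad R. r \<in> reg_elems R \<and> regular_on M r)"
    unfolding property_D_iff torsion_free_iff_regular_on
    using reg_elems_disjoint_nilrad[OF assms] reg_elems_subset[of R] by auto
  then show ?thesis using property_D_triv_ext_iff_regular[OF assms] by simp
qed

lemma semi_complemented_triv_ext_if_property_D:
  assumes "property_D (triv_ext R M)"
  shows "semi_complemented (triv_ext R M)"
  unfolding semi_complemented_def complemented_def
proof
  fix a assume a: "a \<in> carrier (triv_ext R M) - nilrad (triv_ext R M)"
  then have reg: "a \<in> reg_elems (triv_ext R M)" using assms unfolding property_D_def by blast
  obtain r m where a_eq: "a = (r, m)" and r: "r \<in> carrier R" and m: "m \<in> carrier M"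
    using a by auto
  show "\<exists>b \<in> carrier (triv_ext R M). a \<otimes>\<^bsub>triv_ext R M\<^esub> b = \<zero>\<^bsub>triv_ext R M\<^esub>
      \<and> a \<oplus>\<^bsub>triv_ext R M\<^esub> b \<in> reg_elems (triv_ext R M)"
  proof (intro bexI conjI)
    show "a \<otimes>\<^bsub>triv_ext R M\<^esub> \<zero>\<^bsub>triv_ext R M\<^esub> = \<zero>\<^bsub>triv_ext R M\<^esub>"
      using r m by (simp add: a_eq)
    show "a \<oplus>\<^bsub>triv_ext R M\<^esub> \<zero>\<^bsub>triv_ext R M\<^esub> \<in> reg_elems (triv_ext R M)"
      using r m reg by (simp add: a_eq)
  qed simp
qed

lemma triv_ext_complement_annihilates:
  assumes r: "r \<in> carrier R" and s: "s \<in> carrier R" and e: "e \<in> carrier M" and Y: "Y \<in> carrier M"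
    and prod: "(r, e) \<otimes>\<^bsub>triv_ext R M\<^esub> (s, Y) = \<zero>\<^bsub>triv_ext R M\<^esub>"
    and reg: "regular_on M (r \<oplus> s)"
  shows "s \<odot>\<^bsub>M\<^esub> e = \<zero>\<^bsub>M\<^esub>"
proof -
  from prod have rs: "r \<otimes> s = \<zero>" and sum: "r \<odot>\<^bsub>M\<^esub> Y \<oplus>\<^bsub>M\<^esub> s \<odot>\<^bsub>M\<^esub> e = \<zero>\<^bsub>M\<^esub>" by simp_all
  have "s \<odot>\<^bsub>M\<^esub> (s \<odot>\<^bsub>M\<^esub> e) = s \<odot>\<^bsub>M\<^esub> (r \<odot>\<^bsub>M\<^esub> Y \<oplus>\<^bsub>M\<^esub> s \<odot>\<^bsub>M\<^esub> e)"
    using r s e Y rs by (simp add: smult_r_distr smult_assoc1[symmetric] m_comm)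
  then have ss: "s \<odot>\<^bsub>M\<^esub> (s \<odot>\<^bsub>M\<^esub> e) = \<zero>\<^bsub>M\<^esub>" using sum s by simp
  have "(r \<oplus> s) \<odot>\<^bsub>M\<^esub> (s \<odot>\<^bsub>M\<^esub> e) = (r \<otimes> s) \<odot>\<^bsub>M\<^esub> e \<oplus>\<^bsub>M\<^esub> s \<odot>\<^bsub>M\<^esub> (s \<odot>\<^bsub>M\<^esub> e)"
    using r s e by (simp add: smult_l_distr smult_assoc1)
  also have "\<dots> = \<zero>\<^bsub>M\<^esub>" using rs ss e by simp
  finally show ?thesis using reg s e by (simp add: regular_on_def)
qed

end

lemma quot_module_carrier [simp]: "carrier (quot_module R I) = carrier (R Quot I)"
  and quot_module_add [simp]: "X \<oplus>\<^bsub>quot_module R I\<^esub> Y = X \<oplus>\<^bsub>R Quot I\<^esub> Y"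
  and quot_module_zero [simp]: "\<zero>\<^bsub>quot_module R I\<^esub> = \<zero>\<^bsub>R Quot I\<^esub>"
  and quot_module_smult: "r \<odot>\<^bsub>quot_module R I\<^esub> X = (I +>\<^bsub>R\<^esub> r) \<otimes>\<^bsub>R Quot I\<^esub> X"
  by (simp_all add: quot_module_def)

lemma (in ideal) module_quot_module:
  assumes "cring R" shows "module R (quot_module R I)"
proof -
  interpret Q: cring "R Quot I" by (rule quotient_is_cring[OF assms])
  have "abelian_group (quot_module R I)"
  proof (rule abelian_groupI)
    fix X assume "X \<in> carrier (quot_module R I)"
    then show "\<exists>Y \<in> carrier (quot_module R I). Y \<oplus>\<^bsub>quot_module R I\<^esub> X = \<zero>\<^bsub>quot_module R I\<^esub>"
      using Q.l_neg by auto
  qed (simp_all add: Q.a_ac)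
  then show ?thesis
    by (rule moduleI[OF assms])
      (simp_all add: quot_module_smult ring_hom_closed[OF rcos_ring_hom]
        ring_hom_add[OF rcos_ring_hom] ring_hom_mult[OF rcos_ring_hom] ring_hom_one[OF rcos_ring_hom]
        Q.l_distr Q.r_distr Q.m_assoc)
qed

locale proper_ideal = ideal + cring +
  assumes ideal_ne_carrier: "I \<noteq> carrier R"
begin

sublocale quotient_ring: cring "R Quot I"
  by (rule quotient_is_cring) (rule is_cring)

sublocale quotient: module R "quot_module R I"
  by (rule module_quot_module) (rule is_cring)

lemma one_ne_zero: "\<one> \<noteq> \<zero>"
proof
  assume "\<one> = \<zero>"
  then have "\<one> \<in> I" by simp
  then show False using ideal_ne_carrier one_imp_carrier by blast
qed

lemma rcos_eq_zero_iff: "s \<in> carrier R \<Longrightarrow> I +> s = \<zero>\<^bsub>R Quot I\<^esub> \<longleftrightarrow> s \<in> I"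
  using rcos_const_imp_mem a_rcos_zero[OF is_ideal] by (auto simp: FactRing_def)

lemma quot_module_smult_one:
  "s \<in> carrier R \<Longrightarrow> s \<odot>\<^bsub>quot_module R I\<^esub> \<one>\<^bsub>R Quot I\<^esub> = I +> s"
  using ring_hom_closed[OF rcos_ring_hom] by (simp add: quot_module_smult)

lemma quot_module_smult_ideal:
  assumes "s \<in> I" and "X \<in> carrier (quot_module R I)"
  shows "s \<odot>\<^bsub>quot_module R I\<^esub> X = \<zero>\<^bsub>quot_module R I\<^esub>"
proof -
  have "I +> s = \<zero>\<^bsub>R Quot I\<^esub>" using assms(1) rcos_eq_zero_iff by (simp add: Icarr)
  then show ?thesis using assms(2) by (simp add: quot_module_smult)
qed

lemma quot_one_ne_zero: "\<one>\<^bsub>R Quot I\<^esub> \<noteq> \<zero>\<^bsub>R Quot I\<^esub>"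
proof -
  have "\<one>\<^bsub>R Quot I\<^esub> = I +> \<one>" by (simp add: FactRing_def)
  then show ?thesis using rcos_eq_zero_iff[of \<one>] ideal_ne_carrier one_imp_carrier by auto
qed

lemma semi_complemented_triv_ext_quotE:
  assumes SC: "semi_complemented (triv_ext R (quot_module R I))"
    and r: "r \<in> carrier R" and r_nil: "r \<notin> nilrad R"
  obtains s where "s \<in> I" and "r \<oplus> s \<in> reg_elems R" and "regular_on (quot_module R I) r"
proof -
  let ?M = "quot_module R I" and ?e = "\<one>\<^bsub>R Quot I\<^esub>"
  have e: "?e \<in> carrier ?M" by simp
  then have "(r, ?e) \<in> carrier (triv_ext R ?M) - nilrad (triv_ext R ?M)"
    using r r_nil quotient.nilrad_triv_ext by simp
  then have "complemented (triv_ext R ?M) (r, ?e)"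
    using SC unfolding semi_complemented_def by blast
  then obtain b where b: "b \<in> carrier (triv_ext R ?M)"
    and prod: "(r, ?e) \<otimes>\<^bsub>triv_ext R ?M\<^esub> b = \<zero>\<^bsub>triv_ext R ?M\<^esub>"
    and sum: "(r, ?e) \<oplus>\<^bsub>triv_ext R ?M\<^esub> b \<in> reg_elems (triv_ext R ?M)"
    unfolding complemented_def by blast
  obtain s Y where b_eq: "b = (s, Y)" by fastforce
  with b have s: "s \<in> carrier R" and Y: "Y \<in> carrier ?M" by simp_all
  have "(r \<oplus> s, ?e \<oplus>\<^bsub>?M\<^esub> Y) \<in> reg_elems (triv_ext R ?M)" using sum b_eq by simp
  then have sum_reg: "r \<oplus> s \<in> reg_elems R" and sum_M_reg: "regular_on ?M (r \<oplus> s)"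
    using quotient.reg_elems_triv_ext r s e Y by simp_all
  have "s \<odot>\<^bsub>?M\<^esub> ?e = \<zero>\<^bsub>?M\<^esub>"
    using quotient.triv_ext_complement_annihilates[OF r s e Y] prod b_eq sum_M_reg by simp
  then have sI: "s \<in> I" using quot_module_smult_one[OF s] rcos_eq_zero_iff[OF s] by simp
  have "regular_on ?M r" unfolding regular_on_def
  proof (intro ballI impI)
    fix X assume X: "X \<in> carrier ?M" and rX: "r \<odot>\<^bsub>?M\<^esub> X = \<zero>\<^bsub>?M\<^esub>"
    have "(r \<oplus> s) \<odot>\<^bsub>?M\<^esub> X = r \<odot>\<^bsub>?M\<^esub> X \<oplus>\<^bsub>?M\<^esub> s \<odot>\<^bsub>?M\<^esub> X"
      using r s X by (rule quotient.smult_l_distr)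
    also have "\<dots> = \<zero>\<^bsub>?M\<^esub>" using rX quot_module_smult_ideal[OF sI X] by simp
    finally show "X = \<zero>\<^bsub>?M\<^esub>" using sum_M_reg X unfolding regular_on_def by blast
  qed
  with sI sum_reg show thesis by (rule that)
qed

lemma semi_complemented_triv_ext_quot_imp_subset_nilrad:
  assumes "semi_complemented (triv_ext R (quot_module R I))"
  shows "I \<subseteq> nilrad R"
proof
  fix i assume i: "i \<in> I"
  show "i \<in> nilrad R"
  proof (rule ccontr)
    assume "i \<notin> nilrad R"
    then have "regular_on (quot_module R I) i"
      using semi_complemented_triv_ext_quotE[OF assms Icarr[OF i]] by blast
    moreover have "i \<odot>\<^bsub>quot_module R I\<^esub> \<one>\<^bsub>R Quot I\<^esub> = \<zero>\<^bsub>quot_module R I\<^esub>"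
      using quot_module_smult_ideal[OF i] by simp
    ultimately have "\<one>\<^bsub>R Quot I\<^esub> = \<zero>\<^bsub>R Quot I\<^esub>" unfolding regular_on_def by simp
    with quot_one_ne_zero show False by contradiction
  qed
qed

lemma semi_complemented_triv_ext_quot_imp_property_D:
  assumes "semi_complemented (triv_ext R (quot_module R I))"
  shows "property_D (triv_ext R (quot_module R I))"
  unfolding quotient.property_D_triv_ext_iff_regular[OF one_ne_zero]
proof
  fix r assume r: "r \<in> carrier R - nilrad R"
  then obtain s where s: "s \<in> I" and "r \<oplus> s \<in> reg_elems R" and "regular_on (quot_module R I) r"
    using semi_complemented_triv_ext_quotE[OF assms] by blast
  moreover have "s \<in> nilrad R"
    using semi_complemented_triv_ext_quot_imp_subset_nilrad[OF assms] s by blast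
  ultimately show "r \<in> reg_elems R \<and> regular_on (quot_module R I) r"
    using reg_elems_of_add_nilrad r by blast
qed

end

theorem mainTheorem12:
  fixes R :: "('a, 'c) ring_scheme" and I :: "'a set"
  assumes "cring R" and "ideal I R" and "I \<noteq> carrier R"
  defines "T \<equiv> triv_ext R (quot_module R I)"
  shows "(semi_complemented T \<longleftrightarrow> semi_complemented T \<and> I \<subseteq> nilrad R)
       \<and> (semi_complemented T \<longleftrightarrow> property_D T)
       \<and> (semi_complemented T \<longleftrightarrow> property_D R \<and> torsion_free R (quot_module R I))"
proof -
  interpret proper_ideal I R
    using assms(1-3) unfolding proper_ideal_def proper_ideal_axioms_def by blast
  have "semi_complemented T \<Longrightarrow> I \<subseteq> nilrad R"
    unfolding T_def by (rule semi_complemented_triv_ext_quot_imp_subset_nilrad)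
  moreover have "semi_complemented T \<longleftrightarrow> property_D T"
    unfolding T_def using semi_complemented_triv_ext_quot_imp_property_D
      quotient.semi_complemented_triv_ext_if_property_D by blast
  moreover have "property_D T \<longleftrightarrow> property_D R \<and> torsion_free R (quot_module R I)"
    unfolding T_def by (rule quotient.property_D_triv_ext_iff[OF one_ne_zero])
  ultimately show ?thesis by blast
qed

end
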